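(* Let $X$ be a finite simplicial complex with vertices labelled by $\{1,\dots,n\}$, let $d\ge0$, and let $\sigma$ be a symmetry of $X$. Suppose $F^{\uparrow}:C_{d+1}(X)\to C_{d+1}(X)$ is componentwise with every component given by the same odd function $\mathbb{R}\to\mathbb{R}$, and $F^{\downarrow}:C_{d-1}(X)\to C_{d-1}(X)$ is componentwise with every component given by the same odd function $\mathbb{R}\to\mathbb{R}$. Let $G^{\uparrow}=B_{d+1}F^{\uparrow}B_{d+1}^\intercal$ and $G^{\downarrow}=B_d^\intercal F^{\downarrow}B_d$, as maps $C_d(X)\to C_d(X)$. Then $$G^{\uparrow}\circ S^d_\sigma=S^d_\sigma\circ G^{\uparrow}\quad\text{and}\quad G^{\downarrow}\circ S^d_\sigma=S^d_\sigma\circ G^{\downarrow}.$$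
   Context: A finite simplicial complex $X$ on vertex set $\{1,\dots,n\}$ is a collection of nonempty subsets closed under taking nonempty subsets; $X_d$ is the set of simplices with $d+1$ vertices; a $d$-simplex with vertices $i_0<\dots<i_d$ is written $[i_0,\dots,i_d]$ and $A_s=\{i_0,\dots,i_d\}$. $C_d(X)$ is the real vector space with basis $X_d$ and inner product making $X_d$ orthonormal ($C_{-1}(X)=0$, $B_0=0$). The boundary map is $\partial_d[i_0,\dots,i_d]=\sum_{k=0}^d(-1)^k[i_0,\dots,\widehat{i_k},\dots,i_d]$ with matrix $B_d$ in the bases $X_d,X_{d-1}$. A symmetry of $X$ is a permutation $\sigma$ of $\{1,\dots,n\}$ such that for every simplex $s$ the set $\sigma(A_s)$ is again a simplex, denoted $\sigma(s)$. For $A=\{i_0<\dots<i_d\}$, $\operatorname{sgn}(A,\sigma)=\operatorname{sgn}(\tau)$ where $\tau$ is the unique permutation of $\{0,\dots,d\}$ with $\sigma(i_{\tau(0)})<\dots<\sigma(i_{\tau(d)})$. $S^d_\sigma:C_d(X)\to C_d(X)$ is the linear map with $S^d_\sigma(s)=\operatorname{sgn}(A_s,\sigma)\,\sigma(s)$ for $s\in X_d$. A map $F:C_D(X)\to C_D(X)$ is componentwise if $(F(x))_s$ depends only on $x_s$, i.e. $(F(x))_s=F_s(x_s)$. *)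

theory Defs
  imports Complex_Main "HOL-Combinatorics.Permutations"
begin

definition simplicial_complex :: "nat \<Rightarrow> nat set set \<Rightarrow> bool" where
  "simplicial_complex n X \<longleftrightarrow>
     (\<forall>s\<in>X. s \<noteq> {} \<and> s \<subseteq> {1..n}) \<and>
     (\<forall>i\<in>{1..n}. {i} \<in> X) \<and>
     (\<forall>s\<in>X. \<forall>t. t \<noteq> {} \<longrightarrow> t \<subseteq> s \<longrightarrow> t \<in> X)"

text \<open>Simplices with exactly k vertices (so X_d = cfaces X (d+1)).\<close>
definition cfaces :: "nat set set \<Rightarrow> nat \<Rightarrow> nat set set" where
  "cfaces X k = {s \<in> X. card s = k}"

definition chains :: "nat set set \<Rightarrow> nat \<Rightarrow> (nat set \<Rightarrow> real) set" where
  "chains X k = {x. \<forall>s. s \<notin> cfaces X k \<longrightarrow> x s = 0}"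

text \<open>Matrix entry of the boundary map at (t, s): (-1)^k if t = s with its k-th vertex
(counting from 0 in increasing order) removed, else 0.\<close>
definition bd_coeff :: "nat set \<Rightarrow> nat set \<Rightarrow> real" where
  "bd_coeff s t = (if t \<subseteq> s \<and> card s = Suc (card t)
      then (-1) ^ card {i \<in> s. i < the_elem (s - t)} else 0)"

text \<open>B_d : C_d \<rightarrow> C_{d-1} (C_{-1} = 0).\<close>
definition bd :: "nat set set \<Rightarrow> nat \<Rightarrow> (nat set \<Rightarrow> real) \<Rightarrow> (nat set \<Rightarrow> real)" where
  "bd X d x = (\<lambda>t. if t \<in> cfaces X d then (\<Sum>s\<in>cfaces X (d+1). bd_coeff s t * x s) else 0)"

definition bdT :: "nat set set \<Rightarrow> nat \<Rightarrow> (nat set \<Rightarrow> real) \<Rightarrow> (nat set \<Rightarrow> real)" where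
  "bdT X d y = (\<lambda>s. if s \<in> cfaces X (d+1) then (\<Sum>t\<in>cfaces X d. bd_coeff s t * y t) else 0)"

definition compwise :: "nat set set \<Rightarrow> nat \<Rightarrow> (real \<Rightarrow> real) \<Rightarrow> (nat set \<Rightarrow> real) \<Rightarrow> (nat set \<Rightarrow> real)" where
  "compwise X k f y = (\<lambda>s. if s \<in> cfaces X k then f (y s) else 0)"

definition symmetry :: "nat \<Rightarrow> nat set set \<Rightarrow> (nat \<Rightarrow> nat) \<Rightarrow> bool" where
  "symmetry n X \<sigma> \<longleftrightarrow> \<sigma> permutes {1..n} \<and> (\<forall>s\<in>X. \<sigma> ` s \<in> X)"

definition sgn_perm :: "nat set \<Rightarrow> (nat \<Rightarrow> nat) \<Rightarrow> real" where
  "sgn_perm A \<sigma> = (let l = sorted_list_of_set A;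
      \<tau> = (THE \<tau>. \<tau> permutes {..<card A} \<and>
                 strict_mono_on {..<card A} (\<lambda>k. \<sigma> (l ! (\<tau> k))))
    in of_int (sign \<tau>))"

definition S_map :: "nat set set \<Rightarrow> nat \<Rightarrow> (nat \<Rightarrow> nat) \<Rightarrow> (nat set \<Rightarrow> real) \<Rightarrow> (nat set \<Rightarrow> real)" where
  "S_map X d \<sigma> x = (\<lambda>t. \<Sum>s\<in>cfaces X (d+1). if \<sigma> ` s = t then sgn_perm s \<sigma> * x s else 0)"

definition G_up :: "nat set set \<Rightarrow> nat \<Rightarrow> (real \<Rightarrow> real) \<Rightarrow> (nat set \<Rightarrow> real) \<Rightarrow> (nat set \<Rightarrow> real)" where
  "G_up X d f x = bd X (d+1) (compwise X (d+2) f (bdT X (d+1) x))"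

definition G_down :: "nat set set \<Rightarrow> nat \<Rightarrow> (real \<Rightarrow> real) \<Rightarrow> (nat set \<Rightarrow> real) \<Rightarrow> (nat set \<Rightarrow> real)" where
  "G_down X d g x = bdT X d (compwise X d g (bd X d x))"

end

theory Submission
  imports Defs
begin

text \<open>
  \<open>S\<^sup>d\<^sub>\<sigma>\<close> is a signed permutation matrix, so it commutes with a componentwise map given by
  an odd function, and everything else is the equivariance of the boundary coefficients,
  \<open>bd_coeff (\<sigma> ` s) (\<sigma> ` t) = sgn(s, \<sigma>) sgn(t, \<sigma>) bd_coeff s t\<close>.
  To see it, identify \<open>sgn(A, \<sigma>)\<close> with the parity of the number of inversions of \<open>\<sigma>\<close> on \<open>A\<close>.
  Deleting a vertex \<open>v\<close> from \<open>s\<close> changes that number by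
  \<open>#{i \<in> s. i < v} + #{i \<in> s. \<sigma> i < \<sigma> v}\<close> modulo 2, and these two counts are the exponents
  of \<open>-1\<close> in \<open>bd_coeff s (s - {v})\<close> and in \<open>bd_coeff (\<sigma> ` s) (\<sigma> ` s - {\<sigma> v})\<close>.
\<close>

definition increasing_pairs :: "'a::linorder set \<Rightarrow> ('a \<times> 'a) set" where
  "increasing_pairs A = {(i, j). i \<in> A \<and> j \<in> A \<and> i < j}"

definition inversion_sign :: "('a::linorder \<Rightarrow> 'b::linorder) \<Rightarrow> 'a set \<Rightarrow> real" where
  "inversion_sign p A = (\<Prod>(i, j)\<in>increasing_pairs A. if p j < p i then -1 else 1)"

lemma finite_increasing_pairs: "finite A \<Longrightarrow> finite (increasing_pairs A)"
  by (rule finite_subset[of _ "A \<times> A"]) (auto simp: increasing_pairs_def)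

lemma prod_if_neg_one:
  assumes "finite S"
  shows "(\<Prod>x\<in>S. if P x then -1 else 1 :: real) = (-1) ^ card {x\<in>S. P x}"
  using prod.If_cases[OF assms, of P "\<lambda>_. -1" "\<lambda>_. 1"] by (simp add: Collect_conj_eq Int_commute)

lemma inversion_sign_square: "inversion_sign p A ^ 2 = 1"
  unfolding inversion_sign_def prod_power_distrib by (rule prod.neutral) auto

lemma inversion_sign_cong:
  "(\<And>x. x \<in> A \<Longrightarrow> p x = q x) \<Longrightarrow> inversion_sign p A = inversion_sign q A"
  unfolding inversion_sign_def increasing_pairs_def by (intro prod.cong) auto

lemma inversion_sign_strict_mono_comp:
  assumes "strict_mono_on B m" "p ` A \<subseteq> B"
  shows "inversion_sign (m \<circ> p) A = inversion_sign p A"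
  unfolding inversion_sign_def increasing_pairs_def
  using assms by (intro prod.cong) (auto simp: strict_mono_on_less[OF assms(1)] image_subset_iff)

lemma inversion_sign_reindex:
  assumes "bij_betw h A' A" "strict_mono_on A' h"
  shows "inversion_sign p A = inversion_sign (p \<circ> h) A'"
proof -
  have "bij_betw (map_prod h h) (increasing_pairs A') (increasing_pairs A)"
  proof (rule bij_betw_imageI)
    show "inj_on (map_prod h h) (increasing_pairs A')"
      using bij_betw_imp_inj_on[OF assms(1)]
      by (auto simp: inj_on_def increasing_pairs_def)
    show "map_prod h h ` increasing_pairs A' = increasing_pairs A"
    proof
      show "map_prod h h ` increasing_pairs A' \<subseteq> increasing_pairs A"
        using assms by (auto simp: increasing_pairs_def bij_betw_def strict_mono_on_less)
      show "increasing_pairs A \<subseteq> map_prod h h ` increasing_pairs A'"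
      proof
        fix q assume "q \<in> increasing_pairs A"
        then obtain a b where "q = (h a, h b)" "a \<in> A'" "b \<in> A'" "h a < h b"
          using assms(1) by (auto simp: increasing_pairs_def bij_betw_def)
        then show "q \<in> map_prod h h ` increasing_pairs A'"
          using assms(2) by (auto simp: increasing_pairs_def strict_mono_on_less)
      qed
    qed
  qed
  from prod.reindex_bij_betw[OF this, of "\<lambda>(i, j). if p j < p i then -1 else 1 :: real"]
  show ?thesis
    by (simp add: inversion_sign_def case_prod_unfold)
qed

lemma increasing_pairs_remove:
  assumes "v \<in> A"
  shows "increasing_pairs A = increasing_pairs (A - {v}) \<union> (\<lambda>w. (min w v, max w v)) ` (A - {v})"
proof
  show "increasing_pairs A \<subseteq> increasing_pairs (A - {v}) \<union> (\<lambda>w. (min w v, max w v)) ` (A - {v})"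
  proof
    fix r assume "r \<in> increasing_pairs A"
    then obtain a b where ab: "r = (a, b)" "a \<in> A" "b \<in> A" "a < b"
      by (auto simp: increasing_pairs_def)
    consider "a = v" | "b = v" | "a \<noteq> v" "b \<noteq> v" by blast
    then show "r \<in> increasing_pairs (A - {v}) \<union> (\<lambda>w. (min w v, max w v)) ` (A - {v})"
    proof cases
      case 1
      then have "r = (min b v, max b v)" "b \<in> A - {v}" using ab by auto
      then show ?thesis by blast
    next
      case 2
      then have "r = (min a v, max a v)" "a \<in> A - {v}" using ab by auto
      then show ?thesis by blast
    next
      case 3
      then show ?thesis using ab by (auto simp: increasing_pairs_def)
    qed
  qed
qed (use assms in \<open>auto simp: increasing_pairs_def min_def max_def\<close>)

lemma inversion_sign_remove:
  assumes "finite A" "v \<in> A" "inj_on p A"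
  shows "inversion_sign p A =
    inversion_sign p (A - {v}) * (-1) ^ card {i\<in>A. i < v} * (-1) ^ card {i\<in>A. p i < p v}"
proof -
  define F :: "'a \<times> 'a \<Rightarrow> real" where "F = (\<lambda>(i, j). if p j < p i then -1 else 1)"
  define pair_with_v where "pair_with_v = (\<lambda>w. (min w v, max w v))"
  have pairs_split: "increasing_pairs A = increasing_pairs (A - {v}) \<union> pair_with_v ` (A - {v})"
    unfolding pair_with_v_def using assms(2) by (rule increasing_pairs_remove)
  have disjoint: "increasing_pairs (A - {v}) \<inter> pair_with_v ` (A - {v}) = {}"
    by (auto simp: increasing_pairs_def pair_with_v_def min_def max_def split: if_splits)
  have inj: "inj_on pair_with_v (A - {v})"
    by (auto simp: inj_on_def pair_with_v_def min_def max_def split: if_splits)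
  have factor: "F (pair_with_v w) = (if w < v then -1 else 1) * (if p w < p v then -1 else 1)"
    if "w \<in> A - {v}" for w
  proof -
    have "p w \<noteq> p v" using that assms(2,3) by (auto dest: inj_onD)
    then show ?thesis using that by (auto simp: F_def pair_with_v_def min_def max_def)
  qed
  have "inversion_sign p A = prod F (increasing_pairs (A - {v})) * prod (F \<circ> pair_with_v) (A - {v})"
    unfolding inversion_sign_def F_def[symmetric] pairs_split
    using assms(1) disjoint inj by (simp add: prod.union_disjoint finite_increasing_pairs prod.reindex)
  also have "prod (F \<circ> pair_with_v) (A - {v}) =
      (\<Prod>w\<in>A - {v}. if w < v then -1 else 1) * (\<Prod>w\<in>A - {v}. if p w < p v then -1 else 1)"
    using factor by (simp add: prod.distrib)
  also have "\<dots> = (-1) ^ card {i\<in>A. i < v} * (-1) ^ card {i\<in>A. p i < p v}"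
  proof -
    have "{w\<in>A - {v}. w < v} = {i\<in>A. i < v}" "{w\<in>A - {v}. p w < p v} = {i\<in>A. p i < p v}"
      by auto
    then show ?thesis using assms(1) by (simp add: prod_if_neg_one)
  qed
  finally show ?thesis by (simp add: inversion_sign_def F_def mult.assoc)
qed

lemma transpose_Suc_less_iff:
  assumes "{a, b} \<noteq> {i, Suc i}"
  shows "Transposition.transpose i (Suc i) a < Transposition.transpose i (Suc i) b \<longleftrightarrow> a < b"
  using assms by (auto simp: Transposition.transpose_def doubleton_eq_iff)

lemma inversion_sign_transpose_Suc:
  assumes q: "q permutes A" and "finite A" "i \<in> A" "Suc i \<in> A"
  shows "inversion_sign (Transposition.transpose i (Suc i) \<circ> q) A = - inversion_sign q A"
proof -
  define F :: "(nat \<Rightarrow> nat) \<Rightarrow> nat \<times> nat \<Rightarrow> real"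
    where "F = (\<lambda>r (a, b). if r b < r a then -1 else 1)"
  have sign_F: "inversion_sign r A = prod (F r) (increasing_pairs A)" for r
    by (simp add: inversion_sign_def F_def)
  define x y where "x = inv q i" and "y = inv q (Suc i)"
  have "q x = i" "q y = Suc i" "x \<in> A" "y \<in> A"
    using assms by (simp_all add: x_def y_def permutes_inverses(1) permutes_inv permutes_in_image)
  have "x \<noteq> y" using \<open>q x = i\<close> \<open>q y = Suc i\<close> by auto
  define c where "c = (min x y, max x y)"
  have c: "c \<in> increasing_pairs A"
    using \<open>x \<noteq> y\<close> \<open>x \<in> A\<close> \<open>y \<in> A\<close>
    by (auto simp: c_def increasing_pairs_def min_def max_def)
  have flip: "F (Transposition.transpose i (Suc i) \<circ> q) c = - F q c"
    using \<open>q x = i\<close> \<open>q y = Suc i\<close> \<open>x \<noteq> y\<close>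
    by (cases "x < y") (auto simp: F_def c_def Transposition.transpose_def min_def max_def)
  have same: "F (Transposition.transpose i (Suc i) \<circ> q) r = F q r"
    if r_mem: "r \<in> increasing_pairs A - {c}" for r
  proof -
    obtain a b where r: "r = (a, b)" "a < b" "r \<noteq> c"
      using r_mem by (auto simp: increasing_pairs_def)
    have "{q a, q b} \<noteq> {i, Suc i}"
    proof
      assume "{q a, q b} = {i, Suc i}"
      then have "q ` {a, b} = q ` {x, y}"
        using \<open>q x = i\<close> \<open>q y = Suc i\<close> by simp
      then have "{a, b} = {x, y}"
        by (rule inj_image_eq_iff[OF permutes_inj[OF q], THEN iffD1])
      then show False using r by (auto simp: c_def doubleton_eq_iff)
    qed
    then show ?thesis using r transpose_Suc_less_iff[of "q b" "q a" i] by (simp add: F_def insert_commute)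
  qed
  have fin: "finite (increasing_pairs A)" using assms(2) by (rule finite_increasing_pairs)
  show ?thesis
    unfolding sign_F prod.remove[OF fin c] using flip same by simp
qed

lemma inversion_sign_apply_adj_transps:
  fixes k :: nat
  assumes "q permutes {..<k}" "\<forall>x\<in>set xs. Suc x < k"
  shows "inversion_sign (apply_adj_transps xs \<circ> q) {..<k} = (-1) ^ length xs * inversion_sign q {..<k}"
  using assms(2)
proof (induction xs)
  case (Cons x xs)
  have "apply_adj_transps xs \<circ> q permutes {..<k}"
    using Cons.prems assms(1) by (intro permutes_compose permutes_apply_adj_transps) auto
  then have "inversion_sign (Transposition.transpose x (Suc x) \<circ> (apply_adj_transps xs \<circ> q)) {..<k}
      = - inversion_sign (apply_adj_transps xs \<circ> q) {..<k}"
    using Cons.prems by (intro inversion_sign_transpose_Suc) auto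
  then show ?case using Cons by (simp add: o_assoc comp_def)
qed simp

lemma inversion_sign_transpose:
  fixes a b k :: nat
  assumes "q permutes {..<k}" "a < k" "b < k" "a \<noteq> b"
  shows "inversion_sign (Transposition.transpose a b \<circ> q) {..<k} = - inversion_sign q {..<k}"
proof -
  have less: "inversion_sign (Transposition.transpose a b \<circ> q) {..<k} = - inversion_sign q {..<k}"
    if "a < b" "b < k" for a b
  proof -
    have "odd (length (adj_transp_seq a b))"
      using that by (simp add: length_adj_transp_seq)
    then show ?thesis
      using inversion_sign_apply_adj_transps[OF assms(1), of "adj_transp_seq a b"] that
      by (simp add: adj_transp_seq_correct set_adj_transp_seq)
  qed
  show ?thesis
    using assms less[of a b] less[of b a] by (cases "a < b") (auto simp: transpose_commute)
qed

lemma sign_eq_inversion_sign: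
  fixes k :: nat
  assumes "p permutes {..<k}"
  shows "of_int (sign p) = inversion_sign p {..<k}"
  using assms finite_lessThan
proof (induction rule: permutes_induct)
  case id
  show ?case by (auto simp: inversion_sign_def increasing_pairs_def intro!: prod.neutral)
next
  case (swap a b p)
  have "sign (Transposition.transpose a b \<circ> p) = - sign p"
    using swap.hyps
    by (subst sign_compose) (auto simp: permutation_swap_id sign_swap_id intro: permutes_imp_permutation)
  then show ?case
    using swap by (simp add: inversion_sign_transpose del: comp_apply)
qed

lemma permute_list_eq_sort_iff:
  fixes ys :: "'a::linorder list"
  assumes "distinct ys" "\<tau> permutes {..<length ys}"
  shows "permute_list \<tau> ys = sort ys \<longleftrightarrow> strict_mono_on {..<length ys} (\<lambda>i. ys ! \<tau> i)"
proof
  assume "permute_list \<tau> ys = sort ys"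
  moreover have "sorted_wrt (<) (sort ys)"
    using assms(1) by (simp add: strict_sorted_iff)
  ultimately have sorted: "sorted_wrt (<) (permute_list \<tau> ys)" by simp
  show "strict_mono_on {..<length ys} (\<lambda>i. ys ! \<tau> i)"
  proof (rule strict_mono_onI)
    fix i j assume "i \<in> {..<length ys}" "j \<in> {..<length ys}" "i < j"
    then show "ys ! \<tau> i < ys ! \<tau> j"
      using sorted_wrt_nth_less[OF sorted, of i j] by (simp add: permute_list_nth[OF assms(2)])
  qed
next
  assume mono: "strict_mono_on {..<length ys} (\<lambda>i. ys ! \<tau> i)"
  have "sorted (permute_list \<tau> ys)"
    unfolding sorted_iff_nth_mono
    using strict_mono_on_less_eq[OF mono] by (simp add: permute_list_nth[OF assms(2)])
  then show "permute_list \<tau> ys = sort ys"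
    using assms(2) by (intro properties_for_sort[symmetric]) simp_all
qed

lemma permute_list_inject:
  assumes "distinct ys" "\<tau> permutes {..<length ys}" "\<rho> permutes {..<length ys}"
    and "permute_list \<tau> ys = permute_list \<rho> ys"
  shows "\<tau> = \<rho>"
proof
  fix i
  show "\<tau> i = \<rho> i"
  proof (cases "i < length ys")
    case True
    then have "ys ! \<tau> i = ys ! \<rho> i"
      using assms(4) permute_list_nth[OF assms(2)] permute_list_nth[OF assms(3)] by metis
    moreover have "\<tau> i < length ys" "\<rho> i < length ys"
      using True permutes_in_image[OF assms(2), of i] permutes_in_image[OF assms(3), of i] by auto
    ultimately show ?thesis
      using nth_eq_iff_index_eq[OF assms(1)] by blast
  next
    case False
    then show ?thesis using assms(2,3) by (simp add: permutes_not_in)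
  qed
qed

lemma sign_sorting_permutation:
  fixes ys :: "'a::linorder list"
  assumes "distinct ys" "\<tau> permutes {..<length ys}" "permute_list \<tau> ys = sort ys"
  shows "of_int (sign \<tau>) = inversion_sign ((!) ys) {..<length ys}"
proof -
  let ?n = "length ys"
  have inv_perm: "inv \<tau> permutes {..<?n}"
    using assms(2) by (rule permutes_inv)
  have ys_nth: "ys ! j = sort ys ! inv \<tau> j" if "j < ?n" for j
  proof -
    have "ys ! j = ys ! \<tau> (inv \<tau> j)"
      using assms(2) by (simp add: permutes_inverses(1))
    also have "\<dots> = sort ys ! inv \<tau> j"
      using that assms(3) permute_list_nth[OF assms(2), of "inv \<tau> j"]
        permutes_in_image[OF inv_perm, of j] by simp
    finally show ?thesis .
  qed
  have mono: "strict_mono_on {..<?n} ((!) (sort ys))"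
    using assms(1) by (intro strict_mono_onI) (simp add: sorted_wrt_nth_less strict_sorted_iff)
  have "inversion_sign ((!) ys) {..<?n} = inversion_sign ((!) (sort ys) \<circ> inv \<tau>) {..<?n}"
    by (rule inversion_sign_cong) (simp add: ys_nth)
  also have "\<dots> = inversion_sign (inv \<tau>) {..<?n}"
    using mono by (rule inversion_sign_strict_mono_comp) (simp add: permutes_image[OF inv_perm])
  also have "\<dots> = of_int (sign \<tau>)"
    using sign_eq_inversion_sign[OF inv_perm]
      sign_inverse[OF permutes_imp_permutation[OF finite_lessThan assms(2)]] by simp
  finally show ?thesis by (rule sym)
qed

lemma sgn_perm_eq_sign:
  fixes A :: "nat set" and \<sigma> :: "nat \<Rightarrow> nat"
  defines "ys \<equiv> map \<sigma> (sorted_list_of_set A)"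
  assumes "finite A" "inj_on \<sigma> A" "\<tau> permutes {..<card A}" "permute_list \<tau> ys = sort ys"
  shows "sgn_perm A \<sigma> = of_int (sign \<tau>)"
proof -
  define l where "l = sorted_list_of_set A"
  have len: "length ys = card A"
    using assms(2) by (simp add: ys_def)
  have "distinct ys"
    using assms(2,3) by (simp add: ys_def distinct_map)
  have sorting: "strict_mono_on {..<card A} (\<lambda>k. \<sigma> (l ! \<rho> k)) \<longleftrightarrow> permute_list \<rho> ys = sort ys"
    if \<rho>: "\<rho> permutes {..<card A}" for \<rho>
  proof -
    have "ys ! \<rho> i = \<sigma> (l ! \<rho> i)" if "i < card A" for i
      using permutes_in_image[OF \<rho>, of i] that len by (simp add: ys_def l_def)
    then show ?thesis
      using permute_list_eq_sort_iff[OF \<open>distinct ys\<close>, of \<rho>] \<rho> by (simp add: len monotone_on_def)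
  qed
  have "(THE \<rho>. \<rho> permutes {..<card A} \<and> strict_mono_on {..<card A} (\<lambda>k. \<sigma> (l ! \<rho> k))) = \<tau>"
    using assms(4,5) sorting permute_list_inject[OF \<open>distinct ys\<close>]
    by (intro the_equality) (auto simp: len)
  then show ?thesis
    by (simp add: sgn_perm_def l_def)
qed

lemma sgn_perm_eq_inversion_sign:
  assumes "finite A" "inj_on \<sigma> A"
  shows "sgn_perm A \<sigma> = inversion_sign \<sigma> A"
proof -
  define l where "l = sorted_list_of_set A"
  define ys where "ys = map \<sigma> l"
  have l: "sorted_wrt (<) l" "distinct l" "set l = A" "length l = card A"
    using assms(1) by (simp_all add: l_def strict_sorted_list_of_set)
  have len: "length ys = card A"
    using l by (simp add: ys_def)
  obtain \<tau> where \<tau>: "\<tau> permutes {..<card A}" "permute_list \<tau> ys = sort ys"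
    by (rule mset_eq_permutation[of "sort ys" ys]) (simp_all add: len)
  have "sgn_perm A \<sigma> = of_int (sign \<tau>)"
    using assms \<tau> by (intro sgn_perm_eq_sign) (simp_all add: ys_def l_def)
  also have "\<dots> = inversion_sign ((!) ys) {..<card A}"
    using sign_sorting_permutation[of ys] \<tau> l assms(2) by (simp add: len ys_def distinct_map)
  also have "\<dots> = inversion_sign (\<sigma> \<circ> (!) l) {..<card A}"
    using l by (intro inversion_sign_cong) (simp add: ys_def)
  also have "\<dots> = inversion_sign \<sigma> A"
    using l by (intro inversion_sign_reindex[symmetric] strict_mono_onI bij_betw_nth)
      (simp_all add: sorted_wrt_nth_less)
  finally show ?thesis .
qed

lemma bd_coeff_remove:
  assumes "finite s" "v \<in> s"
  shows "bd_coeff s (s - {v}) = (-1) ^ card {i\<in>s. i < v}"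
proof -
  have "s - (s - {v}) = {v}" "card s > 0"
    using assms by (auto simp: card_gt_0_iff)
  then show ?thesis
    using assms by (simp add: bd_coeff_def card_Suc_Diff1)
qed

lemma bd_coeff_eq_0:
  assumes "finite s" "\<And>v. v \<in> s \<Longrightarrow> t \<noteq> s - {v}"
  shows "bd_coeff s t = 0"
proof (rule ccontr)
  assume "bd_coeff s t \<noteq> 0"
  then have "t \<subseteq> s" "card s = Suc (card t)"
    by (auto simp: bd_coeff_def split: if_splits)
  then have "card (s - t) = 1"
    using assms(1) by (simp add: card_Diff_subset finite_subset)
  then obtain v where "s - t = {v}"
    by (rule card_1_singletonE)
  then have "v \<in> s" "t = s - {v}"
    using \<open>t \<subseteq> s\<close> by auto
  then show False using assms(2) by blast
qed

lemma bd_coeff_image: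
  assumes "inj \<sigma>" "finite s"
  shows "bd_coeff (\<sigma> ` s) (\<sigma> ` t) = sgn_perm s \<sigma> * sgn_perm t \<sigma> * bd_coeff s t"
proof (cases "\<exists>v\<in>s. t = s - {v}")
  case True
  then obtain v where v: "v \<in> s" "t = s - {v}" by blast
  have inj_on_sigma: "inj_on \<sigma> A" for A
    using assms(1) by (rule inj_on_subset) simp
  define a where "a = card {i\<in>s. i < v}"
  define b where "b = card {i\<in>s. \<sigma> i < \<sigma> v}"
  have "{w \<in> \<sigma> ` s. w < \<sigma> v} = \<sigma> ` {i\<in>s. \<sigma> i < \<sigma> v}" by auto
  then have "bd_coeff (\<sigma> ` s) (\<sigma> ` t) = (-1) ^ b"
    using bd_coeff_remove[of "\<sigma> ` s" "\<sigma> v"] assms v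
    by (simp add: b_def image_set_diff card_image inj_on_sigma)
  moreover have "sgn_perm s \<sigma> * sgn_perm t \<sigma> = (-1) ^ a * (-1) ^ b"
    using inversion_sign_remove[OF assms(2) v(1) inj_on_sigma] inversion_sign_square[of \<sigma> t] assms(2) v
    by (simp add: a_def b_def sgn_perm_eq_inversion_sign inj_on_sigma power2_eq_square)
  moreover have "bd_coeff s t = (-1) ^ a"
    using assms(2) v by (simp add: a_def bd_coeff_remove)
  moreover have "(-1 :: real) ^ a * (-1) ^ a = 1"
    by (simp flip: power_add)
  ultimately show ?thesis
    by (metis mult.commute mult.left_neutral mult.assoc)
next
  case False
  have "\<sigma> ` t \<noteq> \<sigma> ` s - {w}" if w: "w \<in> \<sigma> ` s" for w
  proof
    assume "\<sigma> ` t = \<sigma> ` s - {w}"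
    moreover obtain v where "v \<in> s" "w = \<sigma> v" using w by blast
    ultimately have "\<sigma> ` t = \<sigma> ` (s - {v})" using assms(1) by (simp add: image_set_diff)
    then have "t = s - {v}" using assms(1) by (simp add: inj_image_eq_iff)
    then show False using False \<open>v \<in> s\<close> by blast
  qed
  then show ?thesis
    using False assms by (simp add: bd_coeff_eq_0)
qed

definition S_chain :: "nat set set \<Rightarrow> nat \<Rightarrow> (nat \<Rightarrow> nat) \<Rightarrow> (nat set \<Rightarrow> real) \<Rightarrow> (nat set \<Rightarrow> real)" where
  "S_chain X k \<sigma> x = (\<lambda>t. if t \<in> cfaces X k then sgn_perm (inv \<sigma> ` t) \<sigma> * x (inv \<sigma> ` t) else 0)"

lemma sgn_perm_cases: "sgn_perm A \<sigma> = 1 \<or> sgn_perm A \<sigma> = -1"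
  unfolding sgn_perm_def Let_def sign_def by simp

lemma sgn_perm_square: "sgn_perm A \<sigma> * sgn_perm A \<sigma> = 1"
  using sgn_perm_cases[of A \<sigma>] by auto

lemma odd_fun_sgn_perm_mult:
  assumes "\<And>u. f (- u) = - f u"
  shows "f (sgn_perm A \<sigma> * u) = sgn_perm A \<sigma> * f u"
  using sgn_perm_cases[of A \<sigma>] assms[of u] by auto

locale complex_symmetry =
  fixes n :: nat and X :: "nat set set" and \<sigma> :: "nat \<Rightarrow> nat"
  assumes complex: "simplicial_complex n X" and symmetry: "symmetry n X \<sigma>"
begin

lemma inj_sigma: "inj \<sigma>"
  using symmetry permutes_inj unfolding symmetry_def by blast

lemma finite_face: "s \<in> cfaces X k \<Longrightarrow> finite s"
  using complex finite_subset[of s "{1..n}"] unfolding simplicial_complex_def cfaces_def by auto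

lemma finite_cfaces: "finite (cfaces X k)"
proof -
  have "cfaces X k \<subseteq> Pow {1..n}"
    using complex unfolding simplicial_complex_def cfaces_def by auto
  then show ?thesis by (rule finite_subset) simp
qed

lemma image_face: "s \<in> cfaces X k \<Longrightarrow> \<sigma> ` s \<in> cfaces X k"
  using symmetry inj_sigma unfolding symmetry_def cfaces_def
  by (auto simp: card_image inj_on_subset)

lemma bij_betw_image_cfaces: "bij_betw ((`) \<sigma>) (cfaces X k) (cfaces X k)"
proof -
  have inj: "inj_on ((`) \<sigma>) (cfaces X k)"
    using inj_sigma by (auto intro: inj_onI simp: inj_image_eq_iff)
  have "(`) \<sigma> ` cfaces X k = cfaces X k"
    by (rule endo_inj_surj[OF finite_cfaces _ inj]) (auto simp: image_face)
  then show ?thesis using inj by (simp add: bij_betw_def)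
qed

lemma cfaces_imageE:
  assumes "t \<in> cfaces X k"
  obtains r where "r \<in> cfaces X k" "t = \<sigma> ` r"
  using assms bij_betw_imp_surj_on[OF bij_betw_image_cfaces] by blast

lemma S_chain_image:
  assumes "s \<in> cfaces X k"
  shows "S_chain X k \<sigma> x (\<sigma> ` s) = sgn_perm s \<sigma> * x s"
  using assms inj_sigma by (simp add: S_chain_def image_face image_comp)

lemma S_map_eq_S_chain: "S_map X d \<sigma> = S_chain X (d + 1) \<sigma>"
proof (intro ext)
  fix x t
  show "S_map X d \<sigma> x t = S_chain X (d + 1) \<sigma> x t"
  proof (cases "t \<in> cfaces X (d + 1)")
    case True
    then obtain r where r: "r \<in> cfaces X (d + 1)" "t = \<sigma> ` r"
      by (rule cfaces_imageE)
    then have "S_map X d \<sigma> x t = (\<Sum>s\<in>cfaces X (d + 1). if s = r then sgn_perm s \<sigma> * x s else 0)"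
      unfolding S_map_def using inj_sigma by (simp add: inj_image_eq_iff)
    then show ?thesis
      using r by (simp add: S_chain_image finite_cfaces)
  next
    case False
    then have "\<sigma> ` s \<noteq> t" if "s \<in> cfaces X (d + 1)" for s
      using image_face[OF that] by auto
    then show ?thesis
      using False by (simp add: S_map_def S_chain_def)
  qed
qed

lemma bd_S_chain: "bd X k (S_chain X (k + 1) \<sigma> z) = S_chain X k \<sigma> (bd X k z)"
proof
  fix t
  show "bd X k (S_chain X (k + 1) \<sigma> z) t = S_chain X k \<sigma> (bd X k z) t"
  proof (cases "t \<in> cfaces X k")
    case True
    then obtain r where r: "r \<in> cfaces X k" "t = \<sigma> ` r"
      by (rule cfaces_imageE)
    have "bd X k (S_chain X (k + 1) \<sigma> z) t =
        (\<Sum>s\<in>cfaces X (k + 1). bd_coeff s t * S_chain X (k + 1) \<sigma> z s)"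
      using True by (simp add: bd_def)
    also have "\<dots> =
        (\<Sum>s\<in>cfaces X (k + 1). bd_coeff (\<sigma> ` s) (\<sigma> ` r) * S_chain X (k + 1) \<sigma> z (\<sigma> ` s))"
      unfolding r(2) by (rule sum.reindex_bij_betw[OF bij_betw_image_cfaces, symmetric])
    also have "\<dots> = (\<Sum>s\<in>cfaces X (k + 1). sgn_perm r \<sigma> * (bd_coeff s r * z s))"
    proof (rule sum.cong[OF refl])
      fix s assume s: "s \<in> cfaces X (k + 1)"
      have "bd_coeff (\<sigma> ` s) (\<sigma> ` r) * S_chain X (k + 1) \<sigma> z (\<sigma> ` s) =
          (sgn_perm s \<sigma> * sgn_perm s \<sigma>) * (sgn_perm r \<sigma> * (bd_coeff s r * z s))"
        using s by (simp add: S_chain_image bd_coeff_image inj_sigma finite_face mult_ac)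
      then show "bd_coeff (\<sigma> ` s) (\<sigma> ` r) * S_chain X (k + 1) \<sigma> z (\<sigma> ` s) =
          sgn_perm r \<sigma> * (bd_coeff s r * z s)"
        by (simp add: sgn_perm_square)
    qed
    also have "\<dots> = S_chain X k \<sigma> (bd X k z) t"
      using r by (simp add: S_chain_image bd_def sum_distrib_left)
    finally show ?thesis .
  qed (simp add: bd_def S_chain_def)
qed

lemma bdT_S_chain: "bdT X k (S_chain X k \<sigma> y) = S_chain X (k + 1) \<sigma> (bdT X k y)"
proof
  fix s
  show "bdT X k (S_chain X k \<sigma> y) s = S_chain X (k + 1) \<sigma> (bdT X k y) s"
  proof (cases "s \<in> cfaces X (k + 1)")
    case True
    then obtain r where r: "r \<in> cfaces X (k + 1)" "s = \<sigma> ` r"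
      by (rule cfaces_imageE)
    have "bdT X k (S_chain X k \<sigma> y) s = (\<Sum>t\<in>cfaces X k. bd_coeff s t * S_chain X k \<sigma> y t)"
      using True by (simp add: bdT_def)
    also have "\<dots> = (\<Sum>t\<in>cfaces X k. bd_coeff (\<sigma> ` r) (\<sigma> ` t) * S_chain X k \<sigma> y (\<sigma> ` t))"
      unfolding r(2) by (rule sum.reindex_bij_betw[OF bij_betw_image_cfaces, symmetric])
    also have "\<dots> = (\<Sum>t\<in>cfaces X k. sgn_perm r \<sigma> * (bd_coeff r t * y t))"
    proof (rule sum.cong[OF refl])
      fix t assume t: "t \<in> cfaces X k"
      have "bd_coeff (\<sigma> ` r) (\<sigma> ` t) * S_chain X k \<sigma> y (\<sigma> ` t) =
          (sgn_perm t \<sigma> * sgn_perm t \<sigma>) * (sgn_perm r \<sigma> * (bd_coeff r t * y t))"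
        using t r by (simp add: S_chain_image bd_coeff_image inj_sigma finite_face mult_ac)
      then show "bd_coeff (\<sigma> ` r) (\<sigma> ` t) * S_chain X k \<sigma> y (\<sigma> ` t) =
          sgn_perm r \<sigma> * (bd_coeff r t * y t)"
        by (simp add: sgn_perm_square)
    qed
    also have "\<dots> = S_chain X (k + 1) \<sigma> (bdT X k y) s"
      using r by (simp add: S_chain_image bdT_def sum_distrib_left)
    finally show ?thesis .
  qed (simp add: bdT_def S_chain_def)
qed

lemma compwise_S_chain:
  assumes "\<And>u. f (- u) = - f u"
  shows "compwise X k f (S_chain X k \<sigma> y) = S_chain X k \<sigma> (compwise X k f y)"
proof
  fix t
  show "compwise X k f (S_chain X k \<sigma> y) t = S_chain X k \<sigma> (compwise X k f y) t"
  proof (cases "t \<in> cfaces X k")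
    case True
    then obtain r where "r \<in> cfaces X k" "t = \<sigma> ` r"
      by (rule cfaces_imageE)
    then show ?thesis
      by (simp add: compwise_def S_chain_image image_face odd_fun_sgn_perm_mult[of f, OF assms])
  qed (simp add: compwise_def S_chain_def)
qed

lemma G_up_S_chain:
  assumes "\<And>u. f (- u) = - f u"
  shows "G_up X d f (S_chain X (d + 1) \<sigma> x) = S_chain X (d + 1) \<sigma> (G_up X d f x)"
  using bdT_S_chain[of "d + 1"] compwise_S_chain[of f, OF assms, of "d + 2"] bd_S_chain[of "d + 1"]
  by (simp add: G_up_def)

lemma G_down_S_chain:
  assumes "\<And>u. f (- u) = - f u"
  shows "G_down X d f (S_chain X (d + 1) \<sigma> x) = S_chain X (d + 1) \<sigma> (G_down X d f x)"
  using bd_S_chain[of d] compwise_S_chain[of f, OF assms, of d] bdT_S_chain[of d]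
  by (simp add: G_down_def)

end

theorem mainTheorem3:
  fixes n d :: nat and X :: "nat set set" and \<sigma> :: "nat \<Rightarrow> nat"
    and f g :: "real \<Rightarrow> real"
  assumes "simplicial_complex n X"
    and "symmetry n X \<sigma>"
    and "\<And>u. f (- u) = - f u"
    and "\<And>u. g (- u) = - g u"
  shows "(\<forall>x\<in>chains X (d+1). G_up X d f (S_map X d \<sigma> x) = S_map X d \<sigma> (G_up X d f x))
       \<and> (\<forall>x\<in>chains X (d+1). G_down X d g (S_map X d \<sigma> x) = S_map X d \<sigma> (G_down X d g x))"
proof -
  interpret complex_symmetry n X \<sigma>
    using assms(1,2) by unfold_locales
  show ?thesis
    using G_up_S_chain[where f = f, OF assms(3)] G_down_S_chain[where f = g, OF assms(4)]
    by (simp add: S_map_eq_S_chain)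
qed

end
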